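(* Suppose all declared valuation functions are symmetric submodular and the item cost functions $c_j:2^N\to\mathbb{R}_{\ge0}$ are arbitrary. Index the players by the iteration in which IACSM removes them from the active set, so that player $i$ is removed (and receives her final bundle $A_i$) in iteration $i$. Then $A_i\subseteq A_{i+1}$ for every $i\in\{1,\dots,n-1\}$.
   Context: Players $N=\{1,\dots,n\}$, items $M=\{1,\dots,m\}$, declared valuations $b_i:2^M\to\mathbb{R}_{\ge0}$ (non-decreasing), item cost functions $c_j:2^N\to\mathbb{R}_{\ge0}$. Symmetric: $f(S)=f(T)$ whenever $|S|=|T|$; submodular: $f(S\cup\{x\})-f(S)\ge f(T\cup\{x\})-f(T)$ for $S\subseteq T$, $x\notin T$. Mechanism IACSM (input: declared valuations $b$): maintain active set $X=N$, sets $T_j=N$ and cost shares $\chi_j=c_j(N)/n$ for all items $j$. While $X\neq\emptyset$: (1) every $i\in X$ computes $A_i\in\arg\max_{S\subseteq M}\{b_i(S)-\sum_{j\in S}\chi_j\}$, choosing among maximizers one of maximum cardinality $k$, and among those the $k$ items with smallest current $\chi_j$ (item ties by index); (2) choose $i^*\in X$ with $|A_{i^*}|$ minimum (ties by smallest index); (3) assign $A_{i^*}$ to $i^*$ permanently and remove $i^*$ from $X$; (4) for every item $j\notin A_{i^*}$ set $T_j:=T_j\setminus\{i^*\}$ and, if $T_j\ne\emptyset$, set $\chi_j:=\max\{\chi_j,c_j(T_j)/|T_j|\}$. Output the assigned bundles and payments $p_i=\sum_{j\in A_i}\chi_j$ with final cost shares. (If several players are removed "simultaneously" at the end, treat them as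 removed one per iteration in a consistent order.) *)

theory Defs
  imports Complex_Main
begin

text \<open>Players are 0..<n, items are 0..<m (the paper's 1..n and 1..m, shifted).
  A mechanism state is (X, T, chi): active players, the sets T_j, the cost shares chi_j.\<close>

type_synonym state = "nat set \<times> (nat \<Rightarrow> nat set) \<times> (nat \<Rightarrow> real)"

definition item_before :: "(nat \<Rightarrow> real) \<Rightarrow> nat \<Rightarrow> nat \<Rightarrow> bool" where
  "item_before chi j j' \<longleftrightarrow> chi j < chi j' \<or> (chi j = chi j' \<and> j < j')"

definition util :: "(nat \<Rightarrow> nat set \<Rightarrow> real) \<Rightarrow> (nat \<Rightarrow> real) \<Rightarrow> nat \<Rightarrow> nat set \<Rightarrow> real" where
  "util b chi i S = b i S - (\<Sum>j\<in>S. chi j)"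

definition maximizers :: "nat \<Rightarrow> (nat \<Rightarrow> nat set \<Rightarrow> real) \<Rightarrow> (nat \<Rightarrow> real) \<Rightarrow> nat \<Rightarrow> nat set set" where
  "maximizers m b chi i =
     {S. S \<subseteq> {0..<m} \<and> (\<forall>S'. S' \<subseteq> {0..<m} \<longrightarrow> util b chi i S' \<le> util b chi i S)}"

definition demand_card :: "nat \<Rightarrow> (nat \<Rightarrow> nat set \<Rightarrow> real) \<Rightarrow> (nat \<Rightarrow> real) \<Rightarrow> nat \<Rightarrow> nat" where
  "demand_card m b chi i = Max (card ` maximizers m b chi i)"

definition demand :: "nat \<Rightarrow> (nat \<Rightarrow> nat set \<Rightarrow> real) \<Rightarrow> (nat \<Rightarrow> real) \<Rightarrow> nat \<Rightarrow> nat set" where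
  "demand m b chi i =
     {j \<in> {0..<m}. card {j' \<in> {0..<m}. item_before chi j' j} < demand_card m b chi i}"

definition chosen :: "nat \<Rightarrow> (nat \<Rightarrow> nat set \<Rightarrow> real) \<Rightarrow> state \<Rightarrow> nat" where
  "chosen m b st = (case st of (X, T, chi) \<Rightarrow>
     (LEAST i. i \<in> X \<and> (\<forall>i'\<in>X. card (demand m b chi i) \<le> card (demand m b chi i'))))"

definition chosen_bundle :: "nat \<Rightarrow> (nat \<Rightarrow> nat set \<Rightarrow> real) \<Rightarrow> state \<Rightarrow> nat set" where
  "chosen_bundle m b st = (case st of (X, T, chi) \<Rightarrow> demand m b chi (chosen m b st))"

definition iacsm_step ::
  "nat \<Rightarrow> (nat \<Rightarrow> nat set \<Rightarrow> real) \<Rightarrow> (nat \<Rightarrow> nat set \<Rightarrow> real) \<Rightarrow> state \<Rightarrow> state" where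
  "iacsm_step m b c st = (case st of (X, T, chi) \<Rightarrow>
     (let i = chosen m b st; A = chosen_bundle m b st in
      (X - {i},
       \<lambda>j. if j \<notin> A then T j - {i} else T j,
       \<lambda>j. if j < m \<and> j \<notin> A \<and> T j - {i} \<noteq> {}
            then max (chi j) (c j (T j - {i}) / real (card (T j - {i})))
            else chi j)))"

definition iacsm_init :: "nat \<Rightarrow> (nat \<Rightarrow> nat set \<Rightarrow> real) \<Rightarrow> state" where
  "iacsm_init n c = ({0..<n}, \<lambda>j. {0..<n}, \<lambda>j. c j {0..<n} / real n)"

definition iacsm_state ::
  "nat \<Rightarrow> nat \<Rightarrow> (nat \<Rightarrow> nat set \<Rightarrow> real) \<Rightarrow> (nat \<Rightarrow> nat set \<Rightarrow> real) \<Rightarrow> nat \<Rightarrow> state" where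
  "iacsm_state n m b c t = (iacsm_step m b c ^^ t) (iacsm_init n c)"

text \<open>Bundle assigned in iteration t (0-based) to the player removed in that iteration.\<close>
definition iacsm_bundle ::
  "nat \<Rightarrow> nat \<Rightarrow> (nat \<Rightarrow> nat set \<Rightarrow> real) \<Rightarrow> (nat \<Rightarrow> nat set \<Rightarrow> real) \<Rightarrow> nat \<Rightarrow> nat set" where
  "iacsm_bundle n m b c t = chosen_bundle m b (iacsm_state n m b c t)"

definition symmetric_on :: "'a set \<Rightarrow> ('a set \<Rightarrow> real) \<Rightarrow> bool" where
  "symmetric_on U f \<longleftrightarrow> (\<forall>S T. S \<subseteq> U \<and> T \<subseteq> U \<and> card S = card T \<longrightarrow> f S = f T)"

definition submodular_on :: "'a set \<Rightarrow> ('a set \<Rightarrow> real) \<Rightarrow> bool" where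
  "submodular_on U f \<longleftrightarrow> (\<forall>S T x. S \<subseteq> T \<and> T \<subseteq> U \<and> x \<in> U - T \<longrightarrow>
      f (insert x S) - f S \<ge> f (insert x T) - f T)"

end

theory Submission
  imports Defs
begin

text \<open>Under a symmetric valuation a player always demands a set of cheapest items, and
  submodularity makes the utility of the k cheapest items nondecreasing in k up to the
  demanded size. The player removed in iteration t demands the a cheapest items, a minimal
  among the active players. The update then raises only prices of items outside this bundle,
  so it stays the set of the a cheapest items, and a bundle of fewer than a items can still
  not beat it. Hence the next player again demands at least a items, among them the a
  cheapest ones.\<close>

subsection \<open>Ranking items by price\<close>

definition price_rank :: "nat \<Rightarrow> (nat \<Rightarrow> real) \<Rightarrow> nat \<Rightarrow> nat" where
  "price_rank m chi j = card {j' \<in> {0..<m}. item_before chi j' j}"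

definition cheapest_items :: "nat \<Rightarrow> (nat \<Rightarrow> real) \<Rightarrow> nat \<Rightarrow> nat set" where
  "cheapest_items m chi k = {j \<in> {0..<m}. price_rank m chi j < k}"

lemma demand_eq_cheapest_items:
  "demand m b chi i = cheapest_items m chi (demand_card m b chi i)"
  unfolding demand_def cheapest_items_def price_rank_def by simp

lemma cheapest_items_subset: "cheapest_items m chi k \<subseteq> {0..<m}"
  unfolding cheapest_items_def by auto

lemma item_before_trans: "item_before chi x y \<Longrightarrow> item_before chi y z \<Longrightarrow> item_before chi x z"
  unfolding item_before_def by auto

lemma item_before_irrefl: "\<not> item_before chi x x"
  unfolding item_before_def by auto

lemma item_before_asym: "item_before chi x y \<Longrightarrow> \<not> item_before chi y x"
  unfolding item_before_def by auto

lemma item_before_total: "x \<noteq> y \<Longrightarrow> item_before chi x y \<or> item_before chi y x"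
  unfolding item_before_def by auto

lemma item_before_imp_le: "item_before chi x y \<Longrightarrow> chi x \<le> chi y"
  unfolding item_before_def by auto

lemma price_rank_strict_mono:
  assumes "j < m" "item_before chi j j'"
  shows "price_rank m chi j < price_rank m chi j'"
proof -
  have "{x \<in> {0..<m}. item_before chi x j} \<subset> {x \<in> {0..<m}. item_before chi x j'}"
    using assms item_before_trans item_before_irrefl by fastforce
  then show ?thesis unfolding price_rank_def by (simp add: psubset_card_mono)
qed

lemma price_rank_less_iff:
  assumes "j < m" "j' < m"
  shows "price_rank m chi j < price_rank m chi j' \<longleftrightarrow> item_before chi j j'"
  using assms item_before_total[of j j' chi] price_rank_strict_mono[of j m chi j']
    price_rank_strict_mono[of j' m chi j] by fastforce

lemma price_rank_less: "j < m \<Longrightarrow> price_rank m chi j < m"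
proof -
  assume j: "j < m"
  have "{x \<in> {0..<m}. item_before chi x j} \<subseteq> {0..<m} - {j}"
    using item_before_irrefl by auto
  then have "price_rank m chi j \<le> card ({0..<m} - {j})"
    unfolding price_rank_def by (simp add: card_mono)
  then show ?thesis using j by simp
qed

lemma inj_on_price_rank: "inj_on (price_rank m chi) {0..<m}"
proof (rule inj_onI)
  fix x y assume "x \<in> {0..<m}" "y \<in> {0..<m}" "price_rank m chi x = price_rank m chi y"
  then show "x = y"
    using item_before_total[of x y chi] price_rank_less_iff[of x m y chi]
      price_rank_less_iff[of y m x chi] by auto
qed

lemma price_rank_image: "price_rank m chi ` {0..<m} = {0..<m}"
proof -
  have "card (price_rank m chi ` {0..<m}) = m"
    using inj_on_price_rank card_image by fastforce
  moreover have "price_rank m chi ` {0..<m} \<subseteq> {0..<m}"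
    using price_rank_less by auto
  ultimately show ?thesis by (simp add: card_subset_eq)
qed

lemma card_cheapest_items:
  assumes "k \<le> m"
  shows "card (cheapest_items m chi k) = k"
proof -
  have "price_rank m chi ` cheapest_items m chi k = price_rank m chi ` {0..<m} \<inter> {0..<k}"
    unfolding cheapest_items_def by auto
  then have "price_rank m chi ` cheapest_items m chi k = {0..<k}"
    using price_rank_image[of m chi] assms by auto
  moreover have "inj_on (price_rank m chi) (cheapest_items m chi k)"
    using inj_on_price_rank cheapest_items_subset by (rule inj_on_subset)
  ultimately show ?thesis by (metis card_atLeastLessThan card_image diff_zero)
qed

lemma cheapest_items_Suc:
  assumes "e < m" "price_rank m chi e = k"
  shows "cheapest_items m chi (Suc k) = insert e (cheapest_items m chi k)"
proof
  show "cheapest_items m chi (Suc k) \<subseteq> insert e (cheapest_items m chi k)"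
  proof
    fix j assume "j \<in> cheapest_items m chi (Suc k)"
    then have j: "j < m" "price_rank m chi j < Suc k"
      unfolding cheapest_items_def by auto
    show "j \<in> insert e (cheapest_items m chi k)"
    proof (cases "price_rank m chi j = k")
      case True
      then have "j = e" using inj_onD[OF inj_on_price_rank, of m chi j e] assms j by simp
      then show ?thesis by simp
    next
      case False
      then show ?thesis using j unfolding cheapest_items_def by simp
    qed
  qed
  show "insert e (cheapest_items m chi k) \<subseteq> cheapest_items m chi (Suc k)"
    using assms unfolding cheapest_items_def by auto
qed

lemma sum_le_sum_if_dominated:
  fixes f :: "'a \<Rightarrow> 'b::linordered_idom"
  assumes "finite A" "finite B" "card A = card B"
    and dom: "\<And>x y. x \<in> A \<Longrightarrow> y \<in> B \<Longrightarrow> f x \<le> f y"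
  shows "sum f A \<le> sum f B"
proof (cases "A = {}")
  case False
  define M where "M = Max (f ` A)"
  have "f x \<le> M" if "x \<in> A" for x
    using that assms(1) unfolding M_def by simp
  then have "sum f A \<le> of_nat (card A) * M"
    by (rule sum_bounded_above)
  have "M \<in> f ` A"
    using assms(1) False unfolding M_def by simp
  then have "M \<le> f y" if "y \<in> B" for y
    using dom that by auto
  then have "of_nat (card B) * M \<le> sum f B"
    by (rule sum_bounded_below)
  with \<open>sum f A \<le> of_nat (card A) * M\<close> show ?thesis
    using assms(3) by simp
qed (use assms in simp)

text \<open>An exchange argument: the elements of the prefix missing from S are cheaper than
  the elements of S missing from the prefix, and there are equally many of them.\<close>
lemma sum_cheapest_items_le:
  assumes S: "S \<subseteq> {0..<m}"
  shows "sum chi (cheapest_items m chi (card S)) \<le> sum chi S"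
proof -
  let ?P = "cheapest_items m chi (card S)"
  have fin: "finite S" "finite ?P"
    using finite_subset[OF S] finite_subset[OF cheapest_items_subset] by auto
  have "card ?P = card S"
    using card_cheapest_items card_mono[OF _ S] by simp
  then have "card (?P - S) = card (S - ?P)"
    using fin by (simp add: card_Diff_subset_Int Int_commute)
  moreover have "chi x \<le> chi y" if "x \<in> ?P - S" "y \<in> S - ?P" for x y
    using that S price_rank_less_iff[of x m y chi] item_before_imp_le
    unfolding cheapest_items_def by fastforce
  ultimately have "sum chi (?P - S) \<le> sum chi (S - ?P)"
    using fin by (intro sum_le_sum_if_dominated) auto
  moreover have "sum chi ?P = sum chi (?P \<inter> S) + sum chi (?P - S)"
    "sum chi S = sum chi (?P \<inter> S) + sum chi (S - ?P)"
    using sum.Int_Diff[OF fin(2), of chi S] sum.Int_Diff[OF fin(1), of chi ?P]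
    by (simp_all add: Int_commute)
  ultimately show ?thesis by simp
qed

lemma cheapest_items_subset_after_price_increase:
  assumes "a \<le> k"
    and eq: "\<And>j. j \<in> cheapest_items m chi a \<Longrightarrow> chi' j = chi j"
    and ge: "\<And>j. j < m \<Longrightarrow> chi j \<le> chi' j"
  shows "cheapest_items m chi a \<subseteq> cheapest_items m chi' k"
proof
  fix j assume j: "j \<in> cheapest_items m chi a"
  then have jm: "j < m" and ja: "price_rank m chi j < a"
    unfolding cheapest_items_def by auto
  have "item_before chi' x j = item_before chi x j" if x: "x \<in> {0..<m}" for x
  proof (cases "x \<in> cheapest_items m chi a")
    case True
    then show ?thesis using eq j unfolding item_before_def by simp
  next
    case False
    then have "item_before chi j x"
      using x ja jm price_rank_less_iff[of j m x chi] unfolding cheapest_items_def by simp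
    moreover from this have "item_before chi' j x"
      using eq[OF j] ge[of x] x unfolding item_before_def by auto
    ultimately show ?thesis using item_before_asym by blast
  qed
  then have "{x \<in> {0..<m}. item_before chi' x j} = {x \<in> {0..<m}. item_before chi x j}"
    by blast
  then have "price_rank m chi' j = price_rank m chi j"
    unfolding price_rank_def by simp
  then show "j \<in> cheapest_items m chi' k"
    using jm ja \<open>a \<le> k\<close> unfolding cheapest_items_def by simp
qed

subsection \<open>Demand under symmetric submodular valuations\<close>

lemma maximizers_finite: "finite (maximizers m b chi i)"
  by (rule finite_subset[of _ "Pow {0..<m}"]) (auto simp: maximizers_def)

lemma maximizers_subset: "S \<in> maximizers m b chi i \<Longrightarrow> S \<subseteq> {0..<m}"
  unfolding maximizers_def by auto

lemma maximizers_optimal: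
  "S \<in> maximizers m b chi i \<Longrightarrow> S' \<subseteq> {0..<m} \<Longrightarrow> util b chi i S' \<le> util b chi i S"
  unfolding maximizers_def by auto

lemma maximizersI:
  "S \<subseteq> {0..<m} \<Longrightarrow> (\<And>S'. S' \<subseteq> {0..<m} \<Longrightarrow> util b chi i S' \<le> util b chi i S)
   \<Longrightarrow> S \<in> maximizers m b chi i"
  unfolding maximizers_def by auto

lemma maximizers_nonempty: "maximizers m b chi i \<noteq> {}"
proof -
  let ?U = "util b chi i ` Pow {0..<m}"
  have U: "finite ?U" "?U \<noteq> {}" by auto
  have "Max ?U \<in> ?U" using U by (rule Max_in)
  then obtain S where S: "S \<subseteq> {0..<m}" "util b chi i S = Max ?U"
    by (metis PowD imageE)
  have "util b chi i S' \<le> util b chi i S" if "S' \<subseteq> {0..<m}" for S'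
    unfolding S(2) using that by (intro Max_ge[OF U(1)]) simp
  then have "S \<in> maximizers m b chi i" by (rule maximizersI[OF S(1)])
  then show ?thesis by blast
qed

lemma demand_card_attained:
  obtains D where "D \<in> maximizers m b chi i" "card D = demand_card m b chi i"
proof -
  have "demand_card m b chi i \<in> card ` maximizers m b chi i"
    unfolding demand_card_def
    using maximizers_nonempty maximizers_finite by (intro Max_in) auto
  then show ?thesis using that by auto
qed

lemma demand_card_ge: "S \<in> maximizers m b chi i \<Longrightarrow> card S \<le> demand_card m b chi i"
  unfolding demand_card_def using maximizers_finite by (intro Max_ge) auto

lemma demand_card_le: "demand_card m b chi i \<le> m"
proof -
  obtain D where D: "D \<in> maximizers m b chi i" "card D = demand_card m b chi i"
    by (rule demand_card_attained)
  then have "D \<subseteq> {0..<m}" by (simp add: maximizers_subset)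
  then show ?thesis using card_mono[OF finite_atLeastLessThan, of D 0 m] D(2) by simp
qed

lemma card_demand: "card (demand m b chi i) = demand_card m b chi i"
  by (simp add: demand_eq_cheapest_items card_cheapest_items demand_card_le)

lemma util_le_util_cheapest_items:
  assumes "symmetric_on {0..<m} (b i)" "S \<subseteq> {0..<m}"
  shows "util b chi i S \<le> util b chi i (cheapest_items m chi (card S))"
proof -
  have "card S \<le> m"
    using card_mono[OF finite_atLeastLessThan assms(2)] by simp
  then have "card (cheapest_items m chi (card S)) = card S"
    by (rule card_cheapest_items)
  then have "b i (cheapest_items m chi (card S)) = b i S"
    using assms(1)[unfolded symmetric_on_def, rule_format, OF conjI[OF cheapest_items_subset
        conjI[OF assms(2)]]] by blast
  then show ?thesis using sum_cheapest_items_le[OF assms(2)] unfolding util_def by simp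
qed

lemma demand_in_maximizers:
  assumes "symmetric_on {0..<m} (b i)"
  shows "demand m b chi i \<in> maximizers m b chi i"
proof -
  obtain D where D: "D \<in> maximizers m b chi i" "card D = demand_card m b chi i"
    by (rule demand_card_attained)
  have "util b chi i S \<le> util b chi i (demand m b chi i)" if "S \<subseteq> {0..<m}" for S
  proof -
    have "util b chi i S \<le> util b chi i D"
      using maximizers_optimal[OF D(1) that] .
    also have "\<dots> \<le> util b chi i (demand m b chi i)"
      using util_le_util_cheapest_items[where b=b and i=i, OF assms maximizers_subset[OF D(1)]] D(2)
      by (simp add: demand_eq_cheapest_items)
    finally show ?thesis .
  qed
  then show ?thesis
    using cheapest_items_subset by (intro maximizersI) (simp_all add: demand_eq_cheapest_items)
qed

text \<open>The gain from adding the next cheapest item e to a shorter prefix dominates, by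
  submodularity, the gain from adding e to the demanded prefix minus e, and the latter is at
  least the price of e because the demanded prefix is optimal.\<close>
lemma util_cheapest_items_Suc_ge:
  assumes sym: "symmetric_on {0..<m} (b i)" and submod: "submodular_on {0..<m} (b i)"
    and k: "k < demand_card m b chi i"
  shows "util b chi i (cheapest_items m chi k) \<le> util b chi i (cheapest_items m chi (Suc k))"
proof -
  let ?P = "cheapest_items m chi" and ?K = "demand_card m b chi i"
  have "k \<in> price_rank m chi ` {0..<m}"
    using price_rank_image[of m chi] k demand_card_le[of m b chi i] by simp
  then obtain e where e: "e < m" "price_rank m chi e = k" by auto
  have eK: "e \<in> ?P ?K" and eP: "e \<notin> ?P k"
    using e k unfolding cheapest_items_def by auto
  have "?P k \<subseteq> ?P ?K - {e}"
    using eP k unfolding cheapest_items_def by auto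
  moreover have "?P ?K - {e} \<subseteq> {0..<m}" "e \<in> {0..<m} - (?P ?K - {e})"
    using cheapest_items_subset e(1) by auto
  ultimately have "b i (insert e (?P ?K - {e})) - b i (?P ?K - {e})
      \<le> b i (insert e (?P k)) - b i (?P k)"
    using submod unfolding submodular_on_def by blast
  moreover have "insert e (?P ?K - {e}) = ?P ?K" using eK by blast
  moreover have "util b chi i (?P ?K - {e}) \<le> util b chi i (?P ?K)"
    using maximizers_optimal[OF demand_in_maximizers[where b=b and i=i, OF sym], of "?P ?K - {e}"]
      \<open>?P ?K - {e} \<subseteq> {0..<m}\<close> by (simp add: demand_eq_cheapest_items)
  moreover have "finite (?P j)" for j
    using finite_subset[OF cheapest_items_subset] by simp
  then have "sum chi (?P ?K) = chi e + sum chi (?P ?K - {e})"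
    "sum chi (insert e (?P k)) = chi e + sum chi (?P k)"
    using sum.remove[OF _ eK] sum.insert[OF _ eP] by simp_all
  ultimately show ?thesis
    unfolding util_def cheapest_items_Suc[OF e] by simp
qed

lemma util_cheapest_items_mono:
  assumes "symmetric_on {0..<m} (b i)" "submodular_on {0..<m} (b i)"
    and "j \<le> k" "k \<le> demand_card m b chi i"
  shows "util b chi i (cheapest_items m chi j) \<le> util b chi i (cheapest_items m chi k)"
  using assms(3,4)
proof (induction k rule: dec_induct)
  case (step k)
  then show ?case
    using util_cheapest_items_Suc_ge[where b=b and i=i and k=k and chi=chi, OF assms(1,2)] by simp
qed simp

lemma demand_card_ge_after_price_increase:
  assumes sym: "symmetric_on {0..<m} (b i)" and submod: "submodular_on {0..<m} (b i)"
    and a: "a \<le> demand_card m b chi i"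
    and eq: "\<And>j. j \<in> cheapest_items m chi a \<Longrightarrow> chi' j = chi j"
    and ge: "\<And>j. j < m \<Longrightarrow> chi j \<le> chi' j"
  shows "a \<le> demand_card m b chi' i"
proof (rule ccontr)
  assume less: "\<not> a \<le> demand_card m b chi' i"
  obtain M where M: "M \<in> maximizers m b chi' i" "card M = demand_card m b chi' i"
    by (rule demand_card_attained)
  have Msub: "M \<subseteq> {0..<m}" using M(1) by (rule maximizers_subset)
  have "util b chi' i M \<le> util b chi i M"
    using ge Msub by (auto simp: util_def intro!: sum_mono)
  also have "\<dots> \<le> util b chi i (cheapest_items m chi (card M))"
    using util_le_util_cheapest_items[where b=b and i=i, OF sym Msub] .
  also have "\<dots> \<le> util b chi i (cheapest_items m chi a)"
    using util_cheapest_items_mono[where b=b and i=i, OF sym submod _ a] M(2) less by simp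
  also have "\<dots> = util b chi' i (cheapest_items m chi a)"
    using eq unfolding util_def by simp
  finally have "cheapest_items m chi a \<in> maximizers m b chi' i"
    using maximizers_optimal[OF M(1)] cheapest_items_subset
    by (intro maximizersI) (auto intro: order_trans)
  then have "card (cheapest_items m chi a) \<le> demand_card m b chi' i"
    by (rule demand_card_ge)
  then show False
    using less a demand_card_le[of m b chi i] card_cheapest_items[of a m chi] by simp
qed

subsection \<open>The mechanism\<close>

lemma chosen_min:
  assumes "finite X" "X \<noteq> {}"
  shows "chosen m b (X, T, chi) \<in> X"
    and "\<And>i. i \<in> X \<Longrightarrow> card (demand m b chi (chosen m b (X, T, chi))) \<le> card (demand m b chi i)"
proof -
  let ?f = "\<lambda>i. card (demand m b chi i)"
  let ?P = "\<lambda>i. i \<in> X \<and> (\<forall>i'\<in>X. ?f i \<le> ?f i')"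
  have "Min (?f ` X) \<in> ?f ` X" using assms by simp
  then obtain i0 where i0: "i0 \<in> X" "?f i0 = Min (?f ` X)" by auto
  have "?f i0 \<le> ?f i'" if "i' \<in> X" for i'
    unfolding i0(2) using assms(1) that by simp
  then have "?P i0" using i0(1) by blast
  then have "?P (LEAST i. ?P i)" by (rule LeastI)
  then show "chosen m b (X, T, chi) \<in> X"
    and "\<And>i. i \<in> X \<Longrightarrow> ?f (chosen m b (X, T, chi)) \<le> ?f i"
    unfolding chosen_def by simp_all
qed

lemma iacsm_stepD:
  assumes "iacsm_step m b c (X, T, chi) = (X', T', chi')"
  shows "X' = X - {chosen m b (X, T, chi)}"
    and "\<And>j. j \<in> chosen_bundle m b (X, T, chi) \<Longrightarrow> chi' j = chi j"
    and "\<And>j. chi j \<le> chi' j"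
  using assms unfolding iacsm_step_def Let_def chosen_bundle_def by auto

lemma iacsm_state_Suc: "iacsm_state n m b c (Suc t) = iacsm_step m b c (iacsm_state n m b c t)"
  unfolding iacsm_state_def by simp

lemma iacsm_active_players:
  "t \<le> n \<Longrightarrow> fst (iacsm_state n m b c t) \<subseteq> {0..<n} \<and> card (fst (iacsm_state n m b c t)) = n - t"
proof (induction t)
  case 0
  then show ?case unfolding iacsm_state_def iacsm_init_def by simp
next
  case (Suc t)
  obtain X T chi where st: "iacsm_state n m b c t = (X, T, chi)"
    by (cases "iacsm_state n m b c t") auto
  obtain X' T' chi' where st': "iacsm_step m b c (X, T, chi) = (X', T', chi')"
    by (cases "iacsm_step m b c (X, T, chi)") auto
  have X: "X \<subseteq> {0..<n}" "card X = n - t" using Suc st by auto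
  then have "finite X" "X \<noteq> {}"
    using Suc.prems finite_subset[OF X(1)] by auto
  then have "chosen m b (X, T, chi) \<in> X" by (rule chosen_min(1))
  moreover have "fst (iacsm_state n m b c (Suc t)) = X - {chosen m b (X, T, chi)}"
    using iacsm_stepD(1)[OF st'] st st' by (simp add: iacsm_state_Suc)
  ultimately show ?case
    using X \<open>finite X\<close> by auto
qed

lemma chosen_bundle_subset_step:
  assumes step: "iacsm_step m b c (X, T, chi) = (X', T', chi')"
    and X: "finite X" and p: "chosen m b (X', T', chi') \<in> X"
    and sym: "symmetric_on {0..<m} (b (chosen m b (X', T', chi')))"
    and submod: "submodular_on {0..<m} (b (chosen m b (X', T', chi')))"
  shows "chosen_bundle m b (X, T, chi) \<subseteq> chosen_bundle m b (X', T', chi')"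
proof -
  define p where "p = chosen m b (X', T', chi')"
  define a where "a = demand_card m b chi (chosen m b (X, T, chi))"
  have "X \<noteq> {}" using p by blast
  then have a: "a \<le> demand_card m b chi p"
    using chosen_min(2)[OF X _ p] unfolding a_def p_def by (simp add: card_demand)
  have A: "chosen_bundle m b (X, T, chi) = cheapest_items m chi a"
    by (simp add: chosen_bundle_def a_def demand_eq_cheapest_items)
  have eq: "\<And>j. j \<in> cheapest_items m chi a \<Longrightarrow> chi' j = chi j"
    using iacsm_stepD(2)[OF step] A by simp
  have ge: "\<And>j. j < m \<Longrightarrow> chi j \<le> chi' j"
    using iacsm_stepD(3)[OF step] by simp
  have "a \<le> demand_card m b chi' p"
    using demand_card_ge_after_price_increase[where b=b and i=p, OF sym[folded p_def]
        submod[folded p_def] a eq ge] .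
  then have "cheapest_items m chi a \<subseteq> cheapest_items m chi' (demand_card m b chi' p)"
    by (rule cheapest_items_subset_after_price_increase[OF _ eq ge])
  then show ?thesis
    unfolding A by (simp add: chosen_bundle_def p_def demand_eq_cheapest_items)
qed

theorem mainTheorem5:
  fixes n m :: nat
    and b :: "nat \<Rightarrow> nat set \<Rightarrow> real"
    and c :: "nat \<Rightarrow> nat set \<Rightarrow> real"
  assumes b_nonneg: "\<And>i S. i < n \<Longrightarrow> S \<subseteq> {0..<m} \<Longrightarrow> b i S \<ge> 0"
    and b_mono: "\<And>i S S'. i < n \<Longrightarrow> S \<subseteq> S' \<Longrightarrow> S' \<subseteq> {0..<m} \<Longrightarrow> b i S \<le> b i S'"
    and b_sym: "\<And>i. i < n \<Longrightarrow> symmetric_on {0..<m} (b i)"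
    and b_submod: "\<And>i. i < n \<Longrightarrow> submodular_on {0..<m} (b i)"
    and c_nonneg: "\<And>j S. j < m \<Longrightarrow> S \<subseteq> {0..<n} \<Longrightarrow> c j S \<ge> 0"
  shows "\<forall>t. Suc t < n \<longrightarrow> iacsm_bundle n m b c t \<subseteq> iacsm_bundle n m b c (Suc t)"
proof (intro allI impI)
  fix t assume t: "Suc t < n"
  obtain X T chi where st: "iacsm_state n m b c t = (X, T, chi)"
    by (cases "iacsm_state n m b c t") auto
  obtain X' T' chi' where st': "iacsm_step m b c (X, T, chi) = (X', T', chi')"
    by (cases "iacsm_step m b c (X, T, chi)") auto
  have X: "X \<subseteq> {0..<n}" "X' \<subseteq> X" "card X' = n - Suc t"
    using iacsm_active_players[of t n m b c] iacsm_active_players[of "Suc t" n m b c] t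
      iacsm_stepD(1)[OF st'] st st' by (auto simp: iacsm_state_Suc)
  have fin: "finite X" by (rule finite_subset[OF X(1)]) simp
  moreover have "X' \<noteq> {}" using X(3) t by auto
  ultimately have "chosen m b (X', T', chi') \<in> X'"
    using finite_subset[OF X(2)] chosen_min(1) by blast
  then have p: "chosen m b (X', T', chi') \<in> X" using X(2) by blast
  then have pn: "chosen m b (X', T', chi') < n" using X(1) by auto
  have "chosen_bundle m b (X, T, chi) \<subseteq> chosen_bundle m b (X', T', chi')"
    using chosen_bundle_subset_step[OF st' fin p b_sym[OF pn] b_submod[OF pn]] .
  then show "iacsm_bundle n m b c t \<subseteq> iacsm_bundle n m b c (Suc t)"
    by (simp add: iacsm_bundle_def iacsm_state_Suc st st')
qed

end
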